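(* Let $(G,c)$ be a $k$-terminal network with terminal set $Q$ such that for every $S\subset Q$ with $S\neq\emptyset,Q$ the minimum-cost $S$-separating cut of $(G,c)$ is unique. Let $A_{G,c}$ be its cutset-edge incidence matrix. Then there exists an edge-cost function $\hat c:E(G)\to\mathbb{R}^+$ such that every mimicking network $(G',c')$ of $(G,\hat c)$ satisfies $|E(G')|\ge \mathrm{rank}(A_{G,c})$.
   Context: A $k$-terminal network $(G,c)$ is an undirected graph with edge costs $c:E(G)\to\mathbb{R}^+$ and terminal set $Q\subseteq V(G)$, $|Q|=k$. For $S\subset Q$, $\bar S=Q\setminus S$; a cut $(W,V(G)\setminus W)$ is $S$-separating if $W\cap Q\in\{S,\bar S\}$; its cutset is the set of edges with exactly one endpoint in $W$ and its cost is the total cost of the cutset. The minimum $S$-separating cut is unique if every other $S$-separating cut has strictly larger cost. $\mathrm{mincut}_{G,c}(S,\bar S)$ is the minimum cost of an $S$-separating cut. Cutset-edge incidence matrix: fix an enumeration $S_1,\dots,S_m$, $m=2^{k-1}-1$, of representatives of the distinct nontrivial bipartitions $Q=S_i\cup\bar S_i$, and for each $i$ fix a minimum-cost $S_i$-separating cut (ties broken arbitrarily); $A_{G,c}\in\{0,1\}^{m\times E(G)}$ has $(A_{G,c})_{i,e}=1$ iff $e$ is in the cutset of that cut. A mimicking network of $(G,\hat c)$ is a $k$-terminal network $(G',c')$ with the same terminal set $Q$ and $\mathrm{mincut}_{G',c'}(S,\bar S)=\mathrm{mincut}_{G,\hat c}(S,\bar S)$ for all $S\subset Q$, $S\neq\emptyset,Q$.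 *)

theory Defs
  imports Main "Jordan_Normal_Form.DL_Rank"
begin

definition graph :: "'a set \<Rightarrow> 'a set set \<Rightarrow> bool" where
  "graph V E \<longleftrightarrow> finite V \<and> (\<forall>e\<in>E. \<exists>u v. u \<in> V \<and> v \<in> V \<and> u \<noteq> v \<and> e = {u, v})"

definition terminal_network :: "'a set \<Rightarrow> 'a set set \<Rightarrow> ('a set \<Rightarrow> real) \<Rightarrow> 'a set \<Rightarrow> bool" where
  "terminal_network V E c Q \<longleftrightarrow> graph V E \<and> (\<forall>e\<in>E. c e > 0) \<and> Q \<subseteq> V"

definition nontrivial_sub :: "'a set \<Rightarrow> 'a set \<Rightarrow> bool" where
  "nontrivial_sub Q S \<longleftrightarrow> S \<subseteq> Q \<and> S \<noteq> {} \<and> S \<noteq> Q"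

definition separating :: "'a set \<Rightarrow> 'a set \<Rightarrow> 'a set \<Rightarrow> 'a set \<Rightarrow> bool" where
  "separating V Q S W \<longleftrightarrow> W \<subseteq> V \<and> (W \<inter> Q = S \<or> W \<inter> Q = Q - S)"

definition cutset :: "'a set set \<Rightarrow> 'a set \<Rightarrow> 'a set set" where
  "cutset E W = {e \<in> E. \<exists>u v. e = {u, v} \<and> u \<in> W \<and> v \<notin> W}"

definition cut_cost :: "'a set set \<Rightarrow> ('a set \<Rightarrow> real) \<Rightarrow> 'a set \<Rightarrow> real" where
  "cut_cost E c W = sum c (cutset E W)"

definition mincut :: "'a set \<Rightarrow> 'a set set \<Rightarrow> ('a set \<Rightarrow> real) \<Rightarrow> 'a set \<Rightarrow> 'a set \<Rightarrow> real" where
  "mincut V E c Q S = Min {cut_cost E c W | W. separating V Q S W}"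

definition is_min_cut :: "'a set \<Rightarrow> 'a set set \<Rightarrow> ('a set \<Rightarrow> real) \<Rightarrow> 'a set \<Rightarrow> 'a set \<Rightarrow> 'a set \<Rightarrow> bool" where
  "is_min_cut V E c Q S W \<longleftrightarrow> separating V Q S W \<and> cut_cost E c W = mincut V E c Q S"

definition unique_min_cut :: "'a set \<Rightarrow> 'a set set \<Rightarrow> ('a set \<Rightarrow> real) \<Rightarrow> 'a set \<Rightarrow> 'a set \<Rightarrow> bool" where
  "unique_min_cut V E c Q S \<longleftrightarrow>
     (\<exists>W. is_min_cut V E c Q S W \<and>
       (\<forall>W'. separating V Q S W' \<and> \<not> (W' = W \<or> W' = V - W) \<longrightarrow> cut_cost E c W' > cut_cost E c W))"

definition bipartitions :: "'a set \<Rightarrow> 'a set set set" where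
  "bipartitions Q = {{S, Q - S} | S. nontrivial_sub Q S}"

definition rep :: "'a set set \<Rightarrow> 'a set" where
  "rep P = (SOME S. S \<in> P)"

definition min_cutset :: "'a set \<Rightarrow> 'a set set \<Rightarrow> ('a set \<Rightarrow> real) \<Rightarrow> 'a set \<Rightarrow> 'a set \<Rightarrow> 'a set set" where
  "min_cutset V E c Q S = cutset E (SOME W. is_min_cut V E c Q S W)"

definition enum_set :: "'b set \<Rightarrow> nat \<Rightarrow> 'b" where
  "enum_set X = (SOME f. bij_betw f {..<card X} X)"

definition incidence_matrix :: "'a set \<Rightarrow> 'a set set \<Rightarrow> ('a set \<Rightarrow> real) \<Rightarrow> 'a set \<Rightarrow> real mat" where
  "incidence_matrix V E c Q =
     mat (card (bipartitions Q)) (card E)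
       (\<lambda>(i, j). if enum_set E j \<in> min_cutset V E c Q (rep (enum_set (bipartitions Q) i)) then 1 else 0)"

definition matrix_rank :: "real mat \<Rightarrow> nat" where
  "matrix_rank A = vec_space.rank (dim_row A) A"

text \<open>The vertices
  of G' are taken from the type 'a + nat; the terminal q of Q is the vertex Inl q,
  so the terminal set of G' is Inl ` Q (every finite network with terminal set Q is
  isomorphic to one of this form).\<close>

definition mimicking :: "('a + nat) set \<Rightarrow> ('a + nat) set set \<Rightarrow> (('a + nat) set \<Rightarrow> real)
     \<Rightarrow> 'a set \<Rightarrow> 'a set set \<Rightarrow> ('a set \<Rightarrow> real) \<Rightarrow> 'a set \<Rightarrow> bool" where
  "mimicking V' E' c' V E c Q \<longleftrightarrow>
     terminal_network V' E' c' (Inl ` Q) \<and>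
     (\<forall>S. nontrivial_sub Q S \<longrightarrow> mincut V' E' c' (Inl ` Q) (Inl ` S) = mincut V E c Q S)"

end

theory Submission
  imports Defs
begin

(* Proof idea: a perturbation argument.  Let A be the incidence matrix A_{G,c},
   m its number of rows and r its rank.  Since every minimum S-separating cut of
   (G,c) is unique, a small perturbation c_t = c + t * delta of the costs keeps the
   chosen minimum cutsets, so the vector of minimum cut values of (G,c_t) is
   A c_t = A c + t (A delta): it moves along a line whose direction lies in the
   column space of A.  In any network (G',c'), on the other hand, the vector of
   minimum cut values is a combination of the 0/1 indicator vectors "which chosen
   minimum cuts contain edge e", hence lies in the span of at most |E'| vectors of
   {0,1}^m.  Only finitely many spans of fewer than r such vectors exist and none
   contains the column space, so some direction A delta avoids all of them, and
   then the line meets each of them in at most one point.  A small t off these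
   points yields c_hat = c_t, and every mimicking network of (G,c_hat) needs at
   least r edges. *)

section \<open>Linear algebra over a field\<close>

context vec_space
begin

lemma rank_le_card_spanning_set:
  assumes A: "A \<in> carrier_mat n nc" and T: "T \<subseteq> carrier_vec n" "finite T"
    and cols: "set (cols A) \<subseteq> span T"
  shows "rank A \<le> card T"
proof -
  obtain S where S: "maximal S (\<lambda>T. T \<subseteq> set (cols A) \<and> lin_indpt T)"
    using maximal_exists[of "(\<lambda>T. T \<subseteq> set (cols A) \<and> lin_indpt T)" "card (set (cols A))" "{}"]
    by (meson List.finite_set card_mono empty_iff empty_subsetI finite_lin_indpt2 rev_finite_subset)
  have rank: "rank A = card S" using rank_card_indpt[OF A S] .
  have S_cols: "S \<subseteq> set (cols A)" and S_indpt: "lin_indpt S"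
    using S by (auto simp: maximal_def)
  have S_fin: "finite S" using S_cols finite_subset by blast
  have S_span: "S \<subseteq> span T" using S_cols cols by blast
  from replacement[OF S_fin T(2) T(1) S_indpt S_span]
  obtain C :: "'a vec set" where "int (card C) \<le> int (card T) - int (card S)" by blast
  then show ?thesis using rank by linarith
qed

lemma line_meets_span_finitely:
  assumes T: "T \<subseteq> carrier_vec n" and w: "w \<in> carrier_vec n" "w \<notin> span T"
    and p: "p \<in> carrier_vec n"
  shows "finite {t. p + t \<cdot>\<^sub>v w \<in> span T}"
proof -
  have unique: "s = s'" if s: "p + s \<cdot>\<^sub>v w \<in> span T" and s': "p + s' \<cdot>\<^sub>v w \<in> span T" for s s'
  proof (rule ccontr)
    assume ne: "s \<noteq> s'"
    have "(p + s \<cdot>\<^sub>v w) + (-1) \<cdot>\<^sub>v (p + s' \<cdot>\<^sub>v w) \<in> span T"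
      using s s' span_add1[OF T] smult_in_span[OF T] by auto
    moreover have "(p + s \<cdot>\<^sub>v w) + (-1) \<cdot>\<^sub>v (p + s' \<cdot>\<^sub>v w) = (s - s') \<cdot>\<^sub>v w"
      using p w by (intro eq_vecI) (auto simp: algebra_simps)
    ultimately have "(1 / (s - s')) \<cdot>\<^sub>v ((s - s') \<cdot>\<^sub>v w) \<in> span T"
      using smult_in_span[OF T] by metis
    moreover have "(1 / (s - s')) \<cdot>\<^sub>v ((s - s') \<cdot>\<^sub>v w) = w"
      using ne w by (intro eq_vecI) auto
    ultimately show False using w by simp
  qed
  show ?thesis
  proof (cases "{t. p + t \<cdot>\<^sub>v w \<in> span T} = {}")
    case False
    then obtain s where "p + s \<cdot>\<^sub>v w \<in> span T" by blast
    with unique have "{t. p + t \<cdot>\<^sub>v w \<in> span T} \<subseteq> {s}" by blast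
    then show ?thesis by (rule finite_subset) simp
  qed simp
qed

text \<open>Over an infinite field, a subspace contained in none of finitely many spans
  contains a vector lying in none of them: move from a vector avoiding all but one
  span along a vector outside the last one, avoiding the finitely many bad points.\<close>

lemma subspace_avoids_finitely_many_spans:
  assumes inf: "infinite (UNIV :: 'a set)"
    and fin: "finite Fam" and Fam_carrier: "\<forall>T\<in>Fam. T \<subseteq> carrier_vec n"
    and W_carrier: "W \<subseteq> carrier_vec n" and W_zero: "0\<^sub>v n \<in> W"
    and W_add: "\<And>x y. x \<in> W \<Longrightarrow> y \<in> W \<Longrightarrow> x + y \<in> W"
    and W_smult: "\<And>a x. x \<in> W \<Longrightarrow> a \<cdot>\<^sub>v x \<in> W"
    and not_sub: "\<forall>T\<in>Fam. \<not> W \<subseteq> span T"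
  shows "\<exists>w\<in>W. \<forall>T\<in>Fam. w \<notin> span T"
  using fin Fam_carrier not_sub
proof (induction Fam rule: finite_induct)
  case empty
  then show ?case using W_zero by blast
next
  case (insert T0 F)
  then obtain w where w: "w \<in> W" "\<forall>T\<in>F. w \<notin> span T" by auto
  have T0: "T0 \<subseteq> carrier_vec n" using insert by auto
  show ?case
  proof (cases "w \<in> span T0")
    case False
    then show ?thesis using w by auto
  next
    case w_T0: True
    obtain u where u: "u \<in> W" "u \<notin> span T0" using insert by auto
    have wc: "w \<in> carrier_vec n" and uc: "u \<in> carrier_vec n" using w u W_carrier by auto
    have bad_finite: "finite {s. w + s \<cdot>\<^sub>v u \<in> span T}" if TF: "T \<in> F" for T
    proof (cases "u \<in> span T")
      case False
      have "T \<subseteq> carrier_vec n" using insert TF by auto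
      from line_meets_span_finitely[OF this uc False wc] show ?thesis .
    next
      case True
      have Tc: "T \<subseteq> carrier_vec n" using insert TF by auto
      have "w + s \<cdot>\<^sub>v u \<notin> span T" for s
      proof
        assume s: "w + s \<cdot>\<^sub>v u \<in> span T"
        have "(w + s \<cdot>\<^sub>v u) + (- s) \<cdot>\<^sub>v u \<in> span T"
          using s True span_add1[OF Tc] smult_in_span[OF Tc] by auto
        moreover have "(w + s \<cdot>\<^sub>v u) + (- s) \<cdot>\<^sub>v u = w"
          using wc uc by (intro eq_vecI) (auto simp: algebra_simps)
        ultimately show False using w TF by auto
      qed
      then show ?thesis by simp
    qed
    have "finite ((\<Union>T\<in>F. {s. w + s \<cdot>\<^sub>v u \<in> span T}) \<union> {0})"
      using bad_finite insert(1) by simp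
    then obtain s where s: "s \<notin> (\<Union>T\<in>F. {s. w + s \<cdot>\<^sub>v u \<in> span T}) \<union> {0}"
      using ex_new_if_finite[OF inf] by blast
    have "w + s \<cdot>\<^sub>v u \<notin> span T0"
    proof
      assume a: "w + s \<cdot>\<^sub>v u \<in> span T0"
      have "(1 / s) \<cdot>\<^sub>v ((w + s \<cdot>\<^sub>v u) + (-1) \<cdot>\<^sub>v w) \<in> span T0"
        using a w_T0 span_add1[OF T0] smult_in_span[OF T0] by auto
      moreover have "(1 / s) \<cdot>\<^sub>v ((w + s \<cdot>\<^sub>v u) + (-1) \<cdot>\<^sub>v w) = u"
        using wc uc s by (intro eq_vecI) (auto simp: algebra_simps)
      ultimately show False using u by auto
    qed
    moreover have "w + s \<cdot>\<^sub>v u \<in> W" using W_add[OF w(1) W_smult[OF u(1)]] .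
    ultimately show ?thesis using s by auto
  qed
qed

lemma column_space_avoids_small_spans:
  assumes inf: "infinite (UNIV :: 'a set)" and A: "A \<in> carrier_mat n nc"
    and fin: "finite Fam"
    and Fam: "\<forall>T\<in>Fam. T \<subseteq> carrier_vec n \<and> finite T \<and> card T < rank A"
  shows "\<exists>d\<in>carrier_vec nc. \<forall>T\<in>Fam. A *\<^sub>v d \<notin> span T"
proof -
  define W where "W = (\<lambda>x. A *\<^sub>v x) ` carrier_vec nc"
  have W_carrier: "W \<subseteq> carrier_vec n"
  proof
    fix x assume "x \<in> W"
    then obtain v where "x = A *\<^sub>v v" "v \<in> carrier_vec nc" unfolding W_def by (rule imageE)
    then show "x \<in> carrier_vec n" using A by simp
  qed
  have "A *\<^sub>v 0\<^sub>v nc = 0\<^sub>v n" using A by auto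
  then have W_zero: "0\<^sub>v n \<in> W" unfolding W_def by (metis image_eqI zero_carrier_vec)
  have W_add: "x + y \<in> W" if xy: "x \<in> W" "y \<in> W" for x y
  proof -
    obtain a where a: "x = A *\<^sub>v a" "a \<in> carrier_vec nc"
      using xy(1) unfolding W_def by (rule imageE)
    obtain b where b: "y = A *\<^sub>v b" "b \<in> carrier_vec nc"
      using xy(2) unfolding W_def by (rule imageE)
    have "x + y = A *\<^sub>v (a + b)"
      unfolding a(1) b(1) by (rule mult_add_distrib_mat_vec[OF A a(2) b(2), symmetric])
    then show ?thesis unfolding W_def by (rule image_eqI) (use a b in simp)
  qed
  have W_smult: "k \<cdot>\<^sub>v x \<in> W" if x: "x \<in> W" for k x
  proof -
    obtain a where a: "x = A *\<^sub>v a" "a \<in> carrier_vec nc"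
      using x unfolding W_def by (rule imageE)
    have "k \<cdot>\<^sub>v x = A *\<^sub>v (k \<cdot>\<^sub>v a)"
      unfolding a(1) by (rule mult_mat_vec[OF A a(2), symmetric])
    then show ?thesis unfolding W_def by (rule image_eqI) (use a in simp)
  qed
  have cols_W: "set (cols A) \<subseteq> W"
  proof
    fix x assume "x \<in> set (cols A)"
    then obtain j where j: "j < nc" "x = col A j" using A by (auto simp: cols_def)
    have "col A j = A *\<^sub>v unit_vec nc j"
      using A j by (intro eq_vecI) (simp_all add: row_def)
    then show "x \<in> W" unfolding W_def j(2) by (rule image_eqI) simp
  qed
  have not_sub: "\<forall>T\<in>Fam. \<not> W \<subseteq> span T"
  proof (intro ballI notI)
    fix T assume T: "T \<in> Fam" and "W \<subseteq> span T"
    then have "rank A \<le> card T"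
      using Fam cols_W by (intro rank_le_card_spanning_set[OF A]) auto
    moreover have "card T < rank A" using Fam T by blast
    ultimately show False by linarith
  qed
  have "\<forall>T\<in>Fam. T \<subseteq> carrier_vec n" using Fam by blast
  from subspace_avoids_finitely_many_spans[OF inf fin this W_carrier W_zero W_add W_smult not_sub]
  obtain w where w: "w \<in> W" "\<forall>T\<in>Fam. w \<notin> span T" by blast
  from w(1) obtain d where "w = A *\<^sub>v d" "d \<in> carrier_vec nc" unfolding W_def by (rule imageE)
  then show ?thesis using w(2) by blast
qed

end

section \<open>Cuts\<close>

lemma graph_finite_edges: "graph V E \<Longrightarrow> finite E"
proof -
  assume g: "graph V E"
  have "E \<subseteq> Pow V"
  proof
    fix e assume "e \<in> E"
    then obtain u v where "u \<in> V" "v \<in> V" "e = {u, v}" using g unfolding graph_def by meson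
    then show "e \<in> Pow V" by simp
  qed
  moreover have "finite V" using g unfolding graph_def by blast
  ultimately show "finite E" by (simp add: finite_subset)
qed

lemma edge_endpoints:
  assumes "graph V E" and "{u, v} \<in> E"
  shows "u \<in> V" and "v \<in> V"
proof -
  obtain a b where ab: "a \<in> V" "b \<in> V" "{u, v} = {a, b}"
    using assms unfolding graph_def by blast
  have "u \<in> {a, b}" "v \<in> {a, b}" using ab(3) by blast+
  then show "u \<in> V" "v \<in> V" using ab(1,2) by blast+
qed

lemma cutset_subset: "cutset E W \<subseteq> E"
  unfolding cutset_def by blast

lemma cutset_complement:
  assumes g: "graph V E" and W: "W \<subseteq> V"
  shows "cutset E (V - W) = cutset E W"
proof (intro equalityI subsetI)
  fix e assume "e \<in> cutset E (V - W)"
  then obtain u v where e: "e \<in> E" "e = {u, v}" "u \<in> V - W" "v \<notin> V - W"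
    unfolding cutset_def by blast
  have "v \<in> W" using edge_endpoints(2)[OF g] e by blast
  moreover have "e = {v, u}" using e(2) by (simp add: insert_commute)
  ultimately show "e \<in> cutset E W" unfolding cutset_def using e by blast
next
  fix e assume "e \<in> cutset E W"
  then obtain u v where e: "e \<in> E" "e = {u, v}" "u \<in> W" "v \<notin> W"
    unfolding cutset_def by blast
  have "v \<in> V - W" using edge_endpoints(2)[OF g] e by blast
  moreover have "e = {v, u}" using e(2) by (simp add: insert_commute)
  ultimately show "e \<in> cutset E (V - W)" unfolding cutset_def using e W by blast
qed

lemma finite_separating_costs: "finite V \<Longrightarrow> finite {cut_cost E c W | W. separating V Q S W}"
  by (rule finite_image_set, rule finite_subset[of _ "Pow V"]) (auto simp: separating_def)

lemma mincut_le: "finite V \<Longrightarrow> separating V Q S W \<Longrightarrow> mincut V E c Q S \<le> cut_cost E c W"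
  unfolding mincut_def by (rule Min_le[OF finite_separating_costs]) auto

lemma min_cut_exists:
  assumes "finite V" and "separating V Q S W"
  shows "\<exists>W'. is_min_cut V E c Q S W'"
proof -
  have "{cut_cost E c W | W. separating V Q S W} \<noteq> {}" using assms(2) by blast
  from Min_in[OF finite_separating_costs[OF assms(1)] this]
  obtain W' where "separating V Q S W'" "cut_cost E c W' = mincut V E c Q S"
    unfolding mincut_def by auto
  then show ?thesis unfolding is_min_cut_def by blast
qed

text \<open>The minimum cut fixed by choice in the definition of the incidence matrix.\<close>

definition chosen_min_cut :: "'a set \<Rightarrow> 'a set set \<Rightarrow> ('a set \<Rightarrow> real) \<Rightarrow> 'a set \<Rightarrow> 'a set \<Rightarrow> 'a set" where
  "chosen_min_cut V E c Q S = (SOME W. is_min_cut V E c Q S W)"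

lemma chosen_min_cut_is_min_cut:
  assumes "finite V" "S \<subseteq> Q" "Q \<subseteq> V"
  shows "is_min_cut V E c Q S (chosen_min_cut V E c Q S)"
proof -
  have "separating V Q S S" using assms unfolding separating_def by auto
  from min_cut_exists[OF assms(1) this] show ?thesis
    unfolding chosen_min_cut_def by (rule someI_ex)
qed

lemma unique_min_cut_strict:
  assumes tn: "terminal_network V E c Q" and u: "unique_min_cut V E c Q S"
    and sep: "separating V Q S W'" and diff: "cutset E W' \<noteq> cutset E (chosen_min_cut V E c Q S)"
  shows "cut_cost E c (chosen_min_cut V E c Q S) < cut_cost E c W'"
proof -
  let ?W = "chosen_min_cut V E c Q S"
  have g: "graph V E" using tn unfolding terminal_network_def by blast
  obtain W0 where W0: "is_min_cut V E c Q S W0"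
    and strict: "\<And>W'. separating V Q S W' \<Longrightarrow> \<not> (W' = W0 \<or> W' = V - W0) \<Longrightarrow> cut_cost E c W0 < cut_cost E c W'"
    using u unfolding unique_min_cut_def by blast
  have W: "is_min_cut V E c Q S ?W" unfolding chosen_min_cut_def using W0 by (rule someI)
  have W0V: "W0 \<subseteq> V" using W0 unfolding is_min_cut_def separating_def by blast
  have same_cost: "cut_cost E c ?W = cut_cost E c W0" using W0 W unfolding is_min_cut_def by simp
  have "?W = W0 \<or> ?W = V - W0"
  proof (rule ccontr)
    assume "\<not> (?W = W0 \<or> ?W = V - W0)"
    then have "cut_cost E c W0 < cut_cost E c ?W" using strict W unfolding is_min_cut_def by blast
    then show False using same_cost by simp
  qed
  then have "cutset E ?W = cutset E W0" using cutset_complement[OF g W0V] by auto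
  then have "\<not> (W' = W0 \<or> W' = V - W0)" using diff cutset_complement[OF g W0V] by auto
  then show ?thesis using strict[OF sep] same_cost by simp
qed

lemma mincut_attained:
  assumes "finite V" and sep: "separating V Q S W"
    and cheapest: "\<And>W'. separating V Q S W' \<Longrightarrow> cutset E W' \<noteq> cutset E W \<Longrightarrow> cut_cost E c W < cut_cost E c W'"
  shows "mincut V E c Q S = cut_cost E c W"
proof (rule antisym)
  show "mincut V E c Q S \<le> cut_cost E c W" using mincut_le[OF assms(1) sep] .
  obtain W' where W': "is_min_cut V E c Q S W'" using min_cut_exists[OF assms(1) sep] by blast
  have "cut_cost E c W \<le> cut_cost E c W'"
  proof (cases "cutset E W' = cutset E W")
    case True
    then show ?thesis unfolding cut_cost_def by simp
  next
    case False
    then show ?thesis using cheapest[of W'] W' unfolding is_min_cut_def by simp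
  qed
  then show "cut_cost E c W \<le> mincut V E c Q S" using W' unfolding is_min_cut_def by simp
qed

section \<open>Small perturbations of the costs\<close>

definition perturb :: "('b \<Rightarrow> real) \<Rightarrow> ('b \<Rightarrow> real) \<Rightarrow> real \<Rightarrow> 'b \<Rightarrow> real" where
  "perturb c \<delta> t e = c e + t * \<delta> e"

lemma cut_cost_perturb:
  "cut_cost E (perturb c \<delta> t) W = cut_cost E c W + t * cut_cost E \<delta> W"
  unfolding cut_cost_def perturb_def by (simp add: sum.distrib sum_distrib_left)

lemma eventually_affine_pos:
  fixes a b :: real
  assumes "a > 0"
  shows "eventually (\<lambda>t. a + t * b > 0) (at_right 0)"
proof -
  have "((\<lambda>t. a + t * b) \<longlongrightarrow> a + 0 * b) (at_right 0)"
    by (intro tendsto_intros)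
  then show ?thesis using assms order_tendstoD(1) by fastforce
qed

lemma eventually_perturb_pos:
  assumes "finite E" and "\<forall>e\<in>E. c e > 0"
  shows "eventually (\<lambda>t. \<forall>e\<in>E. perturb c \<delta> t e > 0) (at_right 0)"
  unfolding perturb_def using assms eventually_affine_pos
  by (intro eventually_ball_finite) auto

lemma eventually_min_cuts_stable:
  assumes tn: "terminal_network V E c Q"
    and uniq: "\<forall>S. nontrivial_sub Q S \<longrightarrow> unique_min_cut V E c Q S"
  shows "eventually (\<lambda>t. \<forall>S. nontrivial_sub Q S \<longrightarrow>
           mincut V E (perturb c \<delta> t) Q S = cut_cost E (perturb c \<delta> t) (chosen_min_cut V E c Q S))
         (at_right 0)"
proof -
  have finV: "finite V" and QV: "Q \<subseteq> V"
    using tn unfolding terminal_network_def graph_def by auto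
  let ?W = "chosen_min_cut V E c Q"
  define beats where "beats t S W' \<longleftrightarrow> nontrivial_sub Q S \<and> separating V Q S W' \<and>
      cutset E W' \<noteq> cutset E (?W S) \<longrightarrow> cut_cost E (perturb c \<delta> t) (?W S) < cut_cost E (perturb c \<delta> t) W'"
    for t S W'
  have pair: "eventually (\<lambda>t. beats t S W') (at_right 0)" for S W'
  proof (cases "nontrivial_sub Q S \<and> separating V Q S W' \<and> cutset E W' \<noteq> cutset E (?W S)")
    case True
    then have "cut_cost E c W' - cut_cost E c (?W S) > 0"
      using unique_min_cut_strict[OF tn] uniq by auto
    from eventually_affine_pos[OF this, of "cut_cost E \<delta> W' - cut_cost E \<delta> (?W S)"]
    show ?thesis
      unfolding beats_def by (rule eventually_mono) (simp add: cut_cost_perturb algebra_simps)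
  next
    case False
    then show ?thesis unfolding beats_def by (intro always_eventually) blast
  qed
  have "finite (Pow Q)" "finite (Pow V)" using finV QV finite_subset by auto
  then have "eventually (\<lambda>t. \<forall>S\<in>Pow Q. \<forall>W'\<in>Pow V. beats t S W') (at_right 0)"
    using pair by (intro eventually_ball_finite ballI) auto
  then show ?thesis
  proof (rule eventually_mono, intro allI impI)
    fix t S assume all: "\<forall>S\<in>Pow Q. \<forall>W'\<in>Pow V. beats t S W'" and S: "nontrivial_sub Q S"
    have "S \<subseteq> Q" using S unfolding nontrivial_sub_def by blast
    then have "is_min_cut V E c Q S (?W S)" using chosen_min_cut_is_min_cut[OF finV _ QV] by blast
    then have sep: "separating V Q S (?W S)" unfolding is_min_cut_def by blast
    show "mincut V E (perturb c \<delta> t) Q S = cut_cost E (perturb c \<delta> t) (?W S)"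
    proof (rule mincut_attained[OF finV sep])
      fix W' assume "separating V Q S W'" "cutset E W' \<noteq> cutset E (?W S)"
      moreover have "S \<in> Pow Q" "W' \<in> Pow V"
        using \<open>S \<subseteq> Q\<close> \<open>separating V Q S W'\<close> unfolding separating_def by auto
      ultimately show "cut_cost E (perturb c \<delta> t) (?W S) < cut_cost E (perturb c \<delta> t) W'"
        using all S unfolding beats_def by blast
    qed
  qed
qed

section \<open>The incidence matrix as a linear map\<close>

definition row_bipartition :: "'a set \<Rightarrow> nat \<Rightarrow> 'a set" where
  "row_bipartition Q i = rep (enum_set (bipartitions Q) i)"

definition cost_vec :: "'b set \<Rightarrow> ('b \<Rightarrow> real) \<Rightarrow> real vec" where
  "cost_vec E f = vec (card E) (\<lambda>j. f (enum_set E j))"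

lemma enum_set_bij: "finite X \<Longrightarrow> bij_betw (enum_set X) {..<card X} X"
proof -
  assume "finite X"
  then obtain h where "bij_betw h {0..<card X} X" using ex_bij_betw_nat_finite by blast
  then have "\<exists>f. bij_betw f {..<card X} X" by (auto simp: atLeast0LessThan)
  then show ?thesis unfolding enum_set_def by (rule someI_ex)
qed

lemma finite_bipartitions: "finite Q \<Longrightarrow> finite (bipartitions Q)"
proof -
  assume "finite Q"
  moreover have "bipartitions Q \<subseteq> Pow (Pow Q)"
    unfolding bipartitions_def nontrivial_sub_def by blast
  ultimately show ?thesis by (simp add: finite_subset)
qed

lemma row_bipartition_nontrivial:
  assumes "finite Q" and "i < card (bipartitions Q)"
  shows "nontrivial_sub Q (row_bipartition Q i)"
proof -
  have "enum_set (bipartitions Q) i \<in> bipartitions Q"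
    using enum_set_bij[OF finite_bipartitions[OF assms(1)]] assms(2) by (auto simp: bij_betw_def)
  then obtain S where S: "nontrivial_sub Q S" "enum_set (bipartitions Q) i = {S, Q - S}"
    unfolding bipartitions_def by blast
  have "rep {S, Q - S} \<in> {S, Q - S}" unfolding rep_def by (rule someI[of _ S]) simp
  then show ?thesis using S unfolding row_bipartition_def nontrivial_sub_def by auto
qed

lemma cost_vec_perturb: "cost_vec E (perturb c \<delta> t) = cost_vec E c + t \<cdot>\<^sub>v cost_vec E \<delta>"
  unfolding cost_vec_def perturb_def by (intro eq_vecI) auto

lemma cost_vec_surj:
  assumes "finite E" and "d \<in> carrier_vec (card E)"
  shows "\<exists>\<delta>. cost_vec E \<delta> = d"
proof
  let ?idx = "inv_into {..<card E} (enum_set E)"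
  show "cost_vec E (\<lambda>e. d $ ?idx e) = d"
    using assms enum_set_bij[OF assms(1)]
    by (intro eq_vecI) (auto simp: cost_vec_def bij_betw_def inv_into_f_f)
qed

lemma incidence_matrix_carrier:
  "incidence_matrix V E c Q \<in> carrier_mat (card (bipartitions Q)) (card E)"
  unfolding incidence_matrix_def by simp

lemma incidence_matrix_cost_vec:
  assumes "finite E" and i: "i < card (bipartitions Q)"
  shows "(incidence_matrix V E c Q *\<^sub>v cost_vec E f) $ i
           = cut_cost E f (chosen_min_cut V E c Q (row_bipartition Q i))"
proof -
  let ?C = "cutset E (chosen_min_cut V E c Q (row_bipartition Q i))"
  have "(incidence_matrix V E c Q *\<^sub>v cost_vec E f) $ i
      = (\<Sum>j<card E. if enum_set E j \<in> ?C then f (enum_set E j) else 0)"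
    using i unfolding incidence_matrix_def cost_vec_def min_cutset_def chosen_min_cut_def
      row_bipartition_def
    by (auto simp: scalar_prod_def atLeast0LessThan intro: sum.cong)
  also have "\<dots> = (\<Sum>e\<in>E. if e \<in> ?C then f e else 0)"
    using sum.reindex_bij_betw[OF enum_set_bij[OF assms(1)]] .
  also have "\<dots> = sum f (E \<inter> ?C)" by (rule sum.inter_restrict[OF assms(1), symmetric])
  also have "E \<inter> ?C = ?C" using cutset_subset by blast
  finally show ?thesis unfolding cut_cost_def .
qed

section \<open>Spans of 0/1 vectors\<close>

text \<open>Spans in real^m, written so they can be stated outside the vector space
  locale, and the set {0,1}^m of 0/1 vectors.\<close>

abbreviation span_vec :: "nat \<Rightarrow> real vec set \<Rightarrow> real vec set" where
  "span_vec m \<equiv> LinearCombinations.module.span class_ring (module_vec TYPE(real) m)"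

definition zero_one_vecs :: "nat \<Rightarrow> real vec set" where
  "zero_one_vecs m = (\<lambda>X. vec m (\<lambda>i. if i \<in> X then 1 else 0)) ` Pow {..<m}"

lemma zero_one_vecs_finite: "finite (zero_one_vecs m)"
  unfolding zero_one_vecs_def by simp

lemma zero_one_vecs_carrier: "zero_one_vecs m \<subseteq> carrier_vec m"
  unfolding zero_one_vecs_def by auto

text \<open>In any network, the vector of minimum cut values for sets S_0, ..., S_(m-1)
  of terminals is the combination, weighted by c', of the 0/1 vectors recording
  which chosen minimum cuts contain a given edge; hence it lies in the span of at
  most |E'| vectors of {0,1}^m.\<close>

lemma mincut_vector_in_small_span:
  fixes V' :: "'b set" and S :: "nat \<Rightarrow> 'b set"
  assumes tn: "terminal_network V' E' c' Q'" and S: "\<forall>i<m. S i \<subseteq> Q'"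
  shows "\<exists>T \<subseteq> zero_one_vecs m. card T \<le> card E' \<and>
           vec m (\<lambda>i. mincut V' E' c' Q' (S i)) \<in> span_vec m T"
proof -
  interpret VS: vec_space "TYPE(real)" m .
  have g: "graph V' E'" and QV: "Q' \<subseteq> V'" using tn unfolding terminal_network_def by auto
  have finV: "finite V'" using g unfolding graph_def by blast
  have finE: "finite E'" using graph_finite_edges[OF g] .
  define W where "W i = chosen_min_cut V' E' c' Q' (S i)" for i
  define chi where "chi e = vec m (\<lambda>i. if e \<in> cutset E' (W i) then 1 else (0::real))" for e
  define T where "T = chi ` E'"
  have T_01: "T \<subseteq> zero_one_vecs m"
  proof
    fix x assume "x \<in> T"
    then obtain e where e: "x = chi e" "e \<in> E'" unfolding T_def by (rule imageE)
    let ?X = "{i\<in>{..<m}. e \<in> cutset E' (W i)}"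
    have "chi e = vec m (\<lambda>i. if i \<in> ?X then 1 else 0)"
      unfolding chi_def by (intro eq_vecI) auto
    then show "x \<in> zero_one_vecs m" unfolding zero_one_vecs_def e(1) by (rule image_eqI) auto
  qed
  have finT: "finite T" unfolding T_def using finE by simp
  have T_carrier: "T \<subseteq> carrier_vec m" using T_01 zero_one_vecs_carrier by blast
  define a where "a x = sum c' {e\<in>E'. chi e = x}" for x
  have lincomb: "VS.lincomb a T = vec m (\<lambda>i. mincut V' E' c' Q' (S i))"
  proof (rule eq_vecI)
    show "dim_vec (VS.lincomb a T) = dim_vec (vec m (\<lambda>i. mincut V' E' c' Q' (S i)))"
      using VS.lincomb_dim[OF finT T_carrier] by simp
    fix i assume "i < dim_vec (vec m (\<lambda>i. mincut V' E' c' Q' (S i)))"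
    then have i: "i < m" by simp
    have "VS.lincomb a T $ i = (\<Sum>x\<in>T. a x * x $ i)" using VS.lincomb_index[OF i T_carrier] .
    also have "\<dots> = (\<Sum>x\<in>T. \<Sum>e\<in>{e\<in>E'. chi e = x}. c' e * chi e $ i)"
      unfolding a_def sum_distrib_right by (intro sum.cong) auto
    also have "\<dots> = (\<Sum>e\<in>E'. c' e * chi e $ i)"
      unfolding T_def using sum.image_gen[OF finE, of "\<lambda>e. c' e * chi e $ i" chi] by simp
    also have "\<dots> = (\<Sum>e\<in>E'. if e \<in> cutset E' (W i) then c' e else 0)"
      unfolding chi_def using i by (intro sum.cong) auto
    also have "\<dots> = sum c' (E' \<inter> cutset E' (W i))"
      by (rule sum.inter_restrict[OF finE, symmetric])
    also have "E' \<inter> cutset E' (W i) = cutset E' (W i)" using cutset_subset by blast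
    also have "sum c' (cutset E' (W i)) = cut_cost E' c' (W i)" unfolding cut_cost_def ..
    also have "\<dots> = mincut V' E' c' Q' (S i)"
      using chosen_min_cut_is_min_cut[OF finV _ QV] S i unfolding W_def is_min_cut_def by blast
    finally show "VS.lincomb a T $ i = vec m (\<lambda>i. mincut V' E' c' Q' (S i)) $ i" using i by simp
  qed
  have "vec m (\<lambda>i. mincut V' E' c' Q' (S i)) \<in> VS.span T"
    using VS.in_spanI[OF lincomb[symmetric] finT order_refl] .
  moreover have "card T \<le> card E'" unfolding T_def using finE by (rule card_image_le)
  ultimately show ?thesis using T_01 by blast
qed

definition small_zero_one_sets :: "nat \<Rightarrow> nat \<Rightarrow> real vec set set" where
  "small_zero_one_sets m r = {T. T \<subseteq> zero_one_vecs m \<and> card T < r}"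

lemma small_zero_one_sets_finite: "finite (small_zero_one_sets m r)"
proof -
  have "small_zero_one_sets m r \<subseteq> Pow (zero_one_vecs m)"
    unfolding small_zero_one_sets_def by blast
  then show ?thesis by (rule finite_subset) (simp add: zero_one_vecs_finite)
qed

lemma small_zero_one_setsD:
  assumes "T \<in> small_zero_one_sets m r"
  shows "T \<subseteq> carrier_vec m" and "finite T" and "card T < r"
proof -
  have T: "T \<subseteq> zero_one_vecs m" and "card T < r"
    using assms unfolding small_zero_one_sets_def by auto
  then show "card T < r" by simp
  show "T \<subseteq> carrier_vec m" using T zero_one_vecs_carrier by blast
  show "finite T" using T zero_one_vecs_finite by (rule finite_subset)
qed

lemma exists_direction_avoiding_small_spans:
  assumes A: "A \<in> carrier_mat m n"
  shows "\<exists>d\<in>carrier_vec n. \<forall>T\<in>small_zero_one_sets m (matrix_rank A). A *\<^sub>v d \<notin> span_vec m T"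
proof -
  interpret VS: vec_space "TYPE(real)" m .
  have "matrix_rank A = VS.rank A" unfolding matrix_rank_def using A by simp
  then have "\<forall>T\<in>small_zero_one_sets m (matrix_rank A). T \<subseteq> carrier_vec m \<and> finite T \<and> card T < VS.rank A"
    using small_zero_one_setsD by metis
  from VS.column_space_avoids_small_spans[OF infinite_UNIV_char_0 A small_zero_one_sets_finite this]
  show ?thesis .
qed

lemma eventually_notin_finite:
  fixes F :: "real set"
  assumes "finite F"
  shows "eventually (\<lambda>t. t \<notin> F) (at_right 0)"
proof -
  define b where "b = Min (insert 1 (F \<inter> {0<..}))"
  have fin: "finite (insert 1 (F \<inter> {0<..}))" using assms by auto
  have b_pos: "b > 0" unfolding b_def using fin by (subst Min_gr_iff) auto
  show ?thesis
    using eventually_at_right_real[OF b_pos]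
  proof (rule eventually_mono)
    fix x assume x: "x \<in> {0<..<b}"
    show "x \<notin> F"
    proof
      assume "x \<in> F"
      then have "b \<le> x" unfolding b_def using fin x by (intro Min_le) auto
      then show False using x by auto
    qed
  qed
qed

lemma eventually_line_avoids_spans:
  fixes p w :: "real vec"
  assumes fin: "finite Fam" and Fam: "\<forall>T\<in>Fam. T \<subseteq> carrier_vec m \<and> w \<notin> span_vec m T"
    and p: "p \<in> carrier_vec m" and w: "w \<in> carrier_vec m"
  shows "eventually (\<lambda>t. \<forall>T\<in>Fam. p + t \<cdot>\<^sub>v w \<notin> span_vec m T) (at_right 0)"
proof (rule eventually_ball_finite[OF fin], rule ballI)
  interpret VS: vec_space "TYPE(real)" m .
  fix T assume "T \<in> Fam"
  then have "finite {t. p + t \<cdot>\<^sub>v w \<in> VS.span T}"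
    using VS.line_meets_span_finitely[OF _ w _ p] Fam by blast
  from eventually_notin_finite[OF this]
  show "eventually (\<lambda>t. p + t \<cdot>\<^sub>v w \<notin> VS.span T) (at_right 0)" by simp
qed

section \<open>A generic perturbation\<close>

text \<open>They are of the form c + t * delta, where
  A delta avoids all these spans and t > 0 is small enough that the minimum cuts
  do not change and the point A c + t (A delta) avoids them as well.\<close>

lemma exists_generic_costs:
  assumes tn: "terminal_network V E c Q"
    and uniq: "\<forall>S. nontrivial_sub Q S \<longrightarrow> unique_min_cut V E c Q S"
    and m: "m = card (bipartitions Q)"
  shows "\<exists>c_hat. (\<forall>e\<in>E. c_hat e > 0) \<and>
           (\<forall>T\<in>small_zero_one_sets m (matrix_rank (incidence_matrix V E c Q)).
              vec m (\<lambda>i. mincut V E c_hat Q (row_bipartition Q i)) \<notin> span_vec m T)"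
proof -
  have g: "graph V E" and c_pos: "\<forall>e\<in>E. c e > 0" and QV: "Q \<subseteq> V"
    using tn unfolding terminal_network_def by auto
  have finE: "finite E" using graph_finite_edges[OF g] .
  have finQ: "finite Q" using g QV unfolding graph_def by (auto intro: finite_subset)
  define A where "A = incidence_matrix V E c Q"
  define Fam where "Fam = small_zero_one_sets m (matrix_rank A)"
  have A: "A \<in> carrier_mat m (card E)" unfolding A_def m by (rule incidence_matrix_carrier)
  obtain d where d: "d \<in> carrier_vec (card E)" and avoid: "\<forall>T\<in>Fam. A *\<^sub>v d \<notin> span_vec m T"
    using exists_direction_avoiding_small_spans[OF A] unfolding Fam_def by blast
  obtain \<delta> where \<delta>: "cost_vec E \<delta> = d" using cost_vec_surj[OF finE d] by blast
  define p where "p = A *\<^sub>v cost_vec E c"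
  have p: "p \<in> carrier_vec m" and w: "A *\<^sub>v d \<in> carrier_vec m"
    unfolding p_def using A by (simp_all add: carrier_vecI)
  have line: "A *\<^sub>v cost_vec E (perturb c \<delta> t) = p + t \<cdot>\<^sub>v (A *\<^sub>v d)" for t
    unfolding cost_vec_perturb \<delta> p_def using A d
    by (simp add: mult_add_distrib_mat_vec mult_mat_vec cost_vec_def)
  have "eventually (\<lambda>t. (\<forall>e\<in>E. perturb c \<delta> t e > 0) \<and>
      (\<forall>S. nontrivial_sub Q S \<longrightarrow> mincut V E (perturb c \<delta> t) Q S
                                    = cut_cost E (perturb c \<delta> t) (chosen_min_cut V E c Q S)) \<and>
      (\<forall>T\<in>Fam. p + t \<cdot>\<^sub>v (A *\<^sub>v d) \<notin> span_vec m T)) (at_right 0)"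
  proof (intro eventually_conj)
    show "eventually (\<lambda>t. \<forall>T\<in>Fam. p + t \<cdot>\<^sub>v (A *\<^sub>v d) \<notin> span_vec m T) (at_right 0)"
      using small_zero_one_setsD(1) avoid unfolding Fam_def
      by (intro eventually_line_avoids_spans[OF small_zero_one_sets_finite _ p w]) blast
  qed (fact eventually_perturb_pos[OF finE c_pos] eventually_min_cuts_stable[OF tn uniq])+
  from eventually_happens'[OF trivial_limit_at_right_real this]
  obtain t where pos: "\<forall>e\<in>E. perturb c \<delta> t e > 0"
    and stable: "\<And>S. nontrivial_sub Q S \<Longrightarrow> mincut V E (perturb c \<delta> t) Q S
                                    = cut_cost E (perturb c \<delta> t) (chosen_min_cut V E c Q S)"
    and generic: "\<forall>T\<in>Fam. p + t \<cdot>\<^sub>v (A *\<^sub>v d) \<notin> span_vec m T"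
    by blast
  have "vec m (\<lambda>i. mincut V E (perturb c \<delta> t) Q (row_bipartition Q i)) = p + t \<cdot>\<^sub>v (A *\<^sub>v d)"
  proof (rule eq_vecI)
    fix i assume "i < dim_vec (p + t \<cdot>\<^sub>v (A *\<^sub>v d))"
    then have i: "i < m" using A by simp
    have "mincut V E (perturb c \<delta> t) Q (row_bipartition Q i)
        = cut_cost E (perturb c \<delta> t) (chosen_min_cut V E c Q (row_bipartition Q i))"
      using stable row_bipartition_nontrivial[OF finQ] i m by simp
    also have "\<dots> = (A *\<^sub>v cost_vec E (perturb c \<delta> t)) $ i"
      unfolding A_def using incidence_matrix_cost_vec[OF finE] i m by simp
    finally show "vec m (\<lambda>i. mincut V E (perturb c \<delta> t) Q (row_bipartition Q i)) $ i
        = (p + t \<cdot>\<^sub>v (A *\<^sub>v d)) $ i" using i line by simp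
  qed (use A in simp)
  then show ?thesis using pos generic unfolding Fam_def A_def by metis
qed

section \<open>Mimicking networks\<close>

lemma mimicking_cut_values_in_small_span:
  assumes mim: "mimicking V' E' c' V E c_hat Q" and finQ: "finite Q"
    and m: "m = card (bipartitions Q)"
  shows "\<exists>T\<subseteq>zero_one_vecs m. card T \<le> card E' \<and>
           vec m (\<lambda>i. mincut V E c_hat Q (row_bipartition Q i)) \<in> span_vec m T"
proof -
  have tn': "terminal_network V' E' c' (Inl ` Q)" and same_cuts:
    "\<And>S. nontrivial_sub Q S \<Longrightarrow> mincut V' E' c' (Inl ` Q) (Inl ` S) = mincut V E c_hat Q S"
    using mim unfolding mimicking_def by auto
  have rows: "nontrivial_sub Q (row_bipartition Q i)" if "i < m" for i
    using row_bipartition_nontrivial[OF finQ] that m by simp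
  then have "\<forall>i<m. Inl ` row_bipartition Q i \<subseteq> Inl ` Q" unfolding nontrivial_sub_def by blast
  moreover have "vec m (\<lambda>i. mincut V' E' c' (Inl ` Q) (Inl ` row_bipartition Q i))
      = vec m (\<lambda>i. mincut V E c_hat Q (row_bipartition Q i))"
    using same_cuts rows by (intro eq_vecI) auto
  ultimately show ?thesis using mincut_vector_in_small_span[OF tn'] by metis
qed

theorem lemma3p2:
  fixes V :: "'a set" and E :: "'a set set" and c :: "'a set \<Rightarrow> real" and Q :: "'a set"
  assumes "terminal_network V E c Q"
    and "\<forall>S. nontrivial_sub Q S \<longrightarrow> unique_min_cut V E c Q S"
  shows "\<exists>c_hat. (\<forall>e\<in>E. c_hat e > 0) \<and>
           (\<forall>V' E' c'. mimicking V' E' c' V E c_hat Q \<longrightarrow>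
              card E' \<ge> matrix_rank (incidence_matrix V E c Q))"
proof -
  let ?m = "card (bipartitions Q)" and ?r = "matrix_rank (incidence_matrix V E c Q)"
  have finQ: "finite Q"
    using assms(1) unfolding terminal_network_def graph_def by (auto intro: finite_subset)
  obtain c_hat where pos: "\<forall>e\<in>E. c_hat e > 0" and generic: "\<forall>T\<in>small_zero_one_sets ?m ?r.
      vec ?m (\<lambda>i. mincut V E c_hat Q (row_bipartition Q i)) \<notin> span_vec ?m T"
    using exists_generic_costs[OF assms refl] by blast
  have "?r \<le> card E'" if mim: "mimicking V' E' c' V E c_hat Q" for V' E' c'
  proof (rule ccontr)
    assume "\<not> ?r \<le> card E'"
    obtain T where "T \<subseteq> zero_one_vecs ?m" "card T \<le> card E'"
      and in_span: "vec ?m (\<lambda>i. mincut V E c_hat Q (row_bipartition Q i)) \<in> span_vec ?m T"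
      using mimicking_cut_values_in_small_span[OF mim finQ refl] by blast
    with \<open>\<not> ?r \<le> card E'\<close> have "T \<in> small_zero_one_sets ?m ?r"
      unfolding small_zero_one_sets_def by simp
    then show False using generic in_span by blast
  qed
  then show ?thesis using pos by blast
qed

end
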